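(* Let $\Delta\ge 4$ be even, $\phi=\pi/\Delta$, and for $j\in\{0,1,\dots,\Delta/2-1\}$ let $$|j_+\rangle=\tfrac{1}{\sqrt2}\big(|0\rangle+e^{ij\phi}|1\rangle\big),\qquad |j_-\rangle=\tfrac{1}{\sqrt2}\big(|0\rangle-e^{ij\phi}|1\rangle\big).$$ Then for all $j\neq k$ in $\{0,\dots,\Delta/2-1\}$ and all signs $s,t\in\{+,-\}$, the probability of observing the outcome $j_s$ when the state $|k_t\rangle$ is measured in the basis $M(j)=\{|j_+\rangle,|j_-\rangle\}$ satisfies $$|\langle j_s|k_t\rangle|^2\le\cos^2\!\left(\frac{\pi}{2\Delta}\right).$$
   Context: Here $i$ in the exponent denotes the imaginary unit, $|0\rangle,|1\rangle$ the computational basis of a qubit, and measuring a state $|\psi\rangle$ in the orthonormal basis $M(j)$ yields outcome $j_s$ with probability $|\langle j_s|\psi\rangle|^2$. *)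

theory Defs
  imports "HOL-Analysis.Analysis"
begin

text \<open>A single-qubit state is represented by its pair of amplitudes
  (coefficient of |0>, coefficient of |1>).\<close>
type_synonym qubit = "complex \<times> complex"

definition braket :: "qubit \<Rightarrow> qubit \<Rightarrow> complex" where
  "braket u v = cnj (fst u) * fst v + cnj (snd u) * snd v"

definition basis_state :: "nat \<Rightarrow> nat \<Rightarrow> bool \<Rightarrow> qubit" where
  "basis_state \<Delta> j s =
     (complex_of_real (1 / sqrt 2),
      (if s then 1 else -1) * complex_of_real (1 / sqrt 2)
        * exp (\<i> * complex_of_real (real j * (pi / real \<Delta>))))"

end

theory Submission
  imports Defs
begin

text \<open>Up to the sign \<open>\<sigma> = \<plusminus>1\<close> of \<open>st\<close>, the amplitude \<open>\<langle>j\<^sub>s|k\<^sub>t\<rangle>\<close> is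
  \<open>(1 + \<sigma> e\<^bsup>i x\<^esup>)/2\<close> with \<open>x = (k - j)\<phi>\<close>, so the outcome probability is \<open>(1 + \<sigma> cos x)/2\<close>.
  For distinct \<open>j, k < \<Delta>\<close> the angle satisfies \<open>\<phi> \<le> |x| \<le> \<pi> - \<phi>\<close>, hence
  \<open>|cos x| \<le> cos \<phi>\<close>, and \<open>(1 + cos \<phi>)/2 = cos\<^sup>2(\<phi>/2)\<close> by the half-angle formula.
  Neither \<open>\<Delta> \<ge> 4\<close>, nor evenness, nor the restriction to indices below \<open>\<Delta>/2\<close> is needed.\<close>

lemma braket_basis_state:
  "braket (basis_state \<Delta> j s) (basis_state \<Delta> k t)
     = (1 + complex_of_real (if s = t then 1 else -1)
            * cis ((real k - real j) * (pi / real \<Delta>))) / 2"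
proof -
  have exp_cis: "\<And>r. exp (\<i> * complex_of_real r) = cis r"
    by (simp add: cis_conv_exp)
  have sqrt2_sq: "(complex_of_real (sqrt 2))\<^sup>2 = 2"
    by (metis of_real_numeral of_real_power real_sqrt_pow2 zero_le_numeral)
  have "cnj (cis (real j * (pi / real \<Delta>))) * cis (real k * (pi / real \<Delta>))
          = cis ((real k - real j) * (pi / real \<Delta>))"
    by (simp add: cis_cnj cis_mult algebra_simps)
  then show ?thesis
    unfolding braket_def basis_state_def exp_cis
    by (auto simp: field_simps power2_eq_square[symmetric] sqrt2_sq)
qed

lemma cmod_one_plus_sign_cis_half_squared:
  fixes c :: real
  assumes "c = 1 \<or> c = -1"
  shows "(cmod ((1 + complex_of_real c * cis x) / 2))\<^sup>2 = (1 + c * cos x) / 2"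
proof -
  have "(cmod ((1 + complex_of_real c * cis x) / 2))\<^sup>2
          = ((1 + c * cos x) / 2)\<^sup>2 + (c * sin x / 2)\<^sup>2"
    unfolding cmod_power2 by (simp add: cis.code power_divide)
  also have "\<dots> = (1 + 2 * c * cos x + c\<^sup>2 * ((cos x)\<^sup>2 + (sin x)\<^sup>2)) / 4"
    by (simp add: power_divide power_mult_distrib power2_sum field_simps
        del: sin_cos_squared_add sin_cos_squared_add2)
  finally show ?thesis
    using assms by auto
qed

lemma abs_cos_le_cos:
  fixes x \<phi> :: real
  assumes "0 \<le> \<phi>" and "\<phi> \<le> \<bar>x\<bar>" and "\<bar>x\<bar> \<le> pi - \<phi>"
  shows "\<bar>cos x\<bar> \<le> cos \<phi>"
proof -
  have "cos x \<le> cos \<phi>"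
    using cos_monotone_0_pi_le[of \<phi> "\<bar>x\<bar>"] assms by simp
  moreover have "- cos x \<le> cos \<phi>"
    using cos_monotone_0_pi_le[of \<phi> "pi - \<bar>x\<bar>"] assms by simp
  ultimately show ?thesis
    by linarith
qed

lemma cos_half_squared: "(cos (x / 2))\<^sup>2 = (1 + cos x) / 2" for x :: real
  using cos_double_cos[of "x / 2"] by simp

lemma phase_difference_bounds:
  fixes \<Delta> j k :: nat
  assumes "j < \<Delta>" and "k < \<Delta>" and "j \<noteq> k"
  defines "\<phi> \<equiv> pi / real \<Delta>"
  shows "\<phi> \<le> \<bar>(real k - real j) * \<phi>\<bar>" and "\<bar>(real k - real j) * \<phi>\<bar> \<le> pi - \<phi>"
proof -
  have \<Delta>_pos: "0 < real \<Delta>"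
    using assms(1) by simp
  then have \<phi>_pos: "0 < \<phi>"
    by (simp add: \<phi>_def)
  have diff: "1 \<le> \<bar>real k - real j\<bar>" "\<bar>real k - real j\<bar> \<le> real \<Delta> - 1"
    using assms(1-3) by linarith+
  show "\<phi> \<le> \<bar>(real k - real j) * \<phi>\<bar>"
    using mult_right_mono[OF diff(1), of \<phi>] \<phi>_pos by (simp add: abs_mult)
  have "\<bar>(real k - real j) * \<phi>\<bar> \<le> (real \<Delta> - 1) * \<phi>"
    using mult_right_mono[OF diff(2), of \<phi>] \<phi>_pos by (simp add: abs_mult)
  also have "\<dots> = pi - \<phi>"
    using \<Delta>_pos by (simp add: \<phi>_def field_simps)
  finally show "\<bar>(real k - real j) * \<phi>\<bar> \<le> pi - \<phi>" .
qed

theorem lemma7: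
  fixes \<Delta> j k :: nat and s t :: bool
  assumes "\<Delta> \<ge> 4" and "even \<Delta>"
    and "j < \<Delta> div 2" and "k < \<Delta> div 2" and "j \<noteq> k"
  shows "(cmod (braket (basis_state \<Delta> j s) (basis_state \<Delta> k t)))\<^sup>2
           \<le> (cos (pi / (2 * real \<Delta>)))\<^sup>2"
proof -
  define \<phi> where "\<phi> = pi / real \<Delta>"
  define x where "x = (real k - real j) * \<phi>"
  define c :: real where "c = (if s = t then 1 else -1)"
  have c: "c = 1 \<or> c = -1"
    by (simp add: c_def)
  have "(cmod (braket (basis_state \<Delta> j s) (basis_state \<Delta> k t)))\<^sup>2 = (1 + c * cos x) / 2"
    unfolding braket_basis_state c_def[symmetric] x_def[symmetric] \<phi>_def[symmetric]
    by (rule cmod_one_plus_sign_cis_half_squared[OF c])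
  also have "\<dots> \<le> (1 + cos \<phi>) / 2"
  proof -
    have "\<bar>cos x\<bar> \<le> cos \<phi>"
      using abs_cos_le_cos phase_difference_bounds[of j \<Delta> k] assms(3-5)
      by (simp add: x_def \<phi>_def)
    then show ?thesis
      using c by auto
  qed
  also have "\<dots> = (cos (pi / (2 * real \<Delta>)))\<^sup>2"
    using cos_half_squared[of \<phi>] by (simp add: \<phi>_def mult.commute)
  finally show ?thesis .
qed

end
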